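(* Let $\mathcal{X}=\{x_1,\dots,x_n\}$ be a finite set of $n$ categories, let $\mathcal{Q}$ be a set of probability distributions on $\mathcal{X}$, let $\epsilon\in(0,1)$, and let $X=(X_1,\dots,X_p)\in\mathcal{X}^p$. If $$\inf_{Q\in\mathcal{Q}} D(\widehat{P}(X)\,\|\,Q)\;\geq\;\frac{1}{p}\log\left(\frac{1}{\epsilon}\right)+\frac{2n}{p}\log(p+1),$$ then $X$ is contaminated at significance level $\epsilon$ with respect to $\mathcal{Q}$, i.e. $X$ is not typical at significance level $\epsilon$ with respect to $\mathcal{Q}$.
   Context: For $X=(X_1,\dots,X_p)\in\mathcal{X}^p$, the empirical distribution is $\widehat{P}(X)=\frac1p(p_1,\dots,p_n)$ where $p_i=\sum_{j=1}^p\mathbf{1}\{X_j=x_i\}$. An "empirical distribution (of $p$ samples over $n$ categories)" is any vector of this form. For a distribution $Q$ on $\mathcal{X}$ and a set $\mathcal{S}$ of empirical distributions of $p$ samples, $\mathbb{P}_Q(\mathcal{S})$ denotes the probability that $p$ i.i.d. draws from $Q$ have empirical distribution in $\mathcal{S}$. The Kullback–Leibler divergence is $D(P\|Q)=\sum_i P_i\log(P_i/Q_i)$. Typical: let $\widehat{P}^1,\widehat{P}^2,\dots$ be an ordering of all empirical distributions of $p$ samples over the $n$ categories such that $\mathbb{P}_Q(\widehat{P}^1)\le\mathbb{P}_Q(\widehat{P}^2)\le\cdots$ (the ordering depends on $Q$). A sequence $X$ with $\widehat{P}(X)=\widehat{P}^\ell$ is typical at significance level $\epsilon$ with respect to $\mathcal{Q}$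 iff $\sup_{Q\in\mathcal{Q}}\mathbb{P}_Q(\{\widehat{P}^1,\dots,\widehat{P}^\ell\})\ge\epsilon$ for any such ordering. $X$ is contaminated (at significance $\epsilon$ with respect to $\mathcal{Q}$) iff it is not typical. *)

theory Defs
  imports "HOL-Analysis.Analysis"
begin

text \<open>Categories are the elements of a finite type 'a (n = CARD('a)).
  A sample X = (X_1,...,X_p) is a list of length p.\<close>

definition emp_dist :: "'a list \<Rightarrow> ('a \<Rightarrow> real)" where
  "emp_dist xs = (\<lambda>x. real (count_list xs x) / real (length xs))"

definition emp_dists :: "nat \<Rightarrow> ('a \<Rightarrow> real) set" where
  "emp_dists p = {emp_dist xs | xs. length xs = p}"

definition is_distribution :: "('a::finite \<Rightarrow> real) \<Rightarrow> bool" where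
  "is_distribution Q \<longleftrightarrow> (\<forall>x. 0 \<le> Q x) \<and> sum Q UNIV = 1"

text \<open>Probability that p i.i.d. draws from Q have empirical distribution in S.\<close>
definition probQ :: "('a \<Rightarrow> real) \<Rightarrow> nat \<Rightarrow> ('a \<Rightarrow> real) set \<Rightarrow> real" where
  "probQ Q p S = (\<Sum>xs\<in>{xs. length xs = p \<and> emp_dist xs \<in> S}. prod_list (map Q xs))"

definition KL :: "('a::finite \<Rightarrow> real) \<Rightarrow> ('a \<Rightarrow> real) \<Rightarrow> ereal" where
  "KL P Q = (if \<exists>x. P x > 0 \<and> Q x = 0 then \<infinity>
             else ereal (\<Sum>x\<in>{x. P x > 0}. P x * ln (P x / Q x)))"

definition valid_ordering :: "('a \<Rightarrow> real) \<Rightarrow> nat \<Rightarrow> ('a \<Rightarrow> real) list \<Rightarrow> bool" where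
  "valid_ordering Q p L \<longleftrightarrow> distinct L \<and> set L = emp_dists p \<and>
     sorted_wrt (\<lambda>P P'. probQ Q p {P} \<le> probQ Q p {P'}) L"

text \<open>For P = P^l in the list L, the set {P^1, ..., P^l}.\<close>
definition prefix_upto :: "('a \<Rightarrow> real) list \<Rightarrow> ('a \<Rightarrow> real) \<Rightarrow> ('a \<Rightarrow> real) set" where
  "prefix_upto L P = set (takeWhile (\<lambda>P'. P' \<noteq> P) L) \<union> {P}"

definition typical :: "('a \<Rightarrow> real) set \<Rightarrow> real \<Rightarrow> 'a list \<Rightarrow> bool" where
  "typical QQ eps xs \<longleftrightarrow>
     (\<forall>ord. (\<forall>Q\<in>QQ. valid_ordering Q (length xs) (ord Q)) \<longrightarrow>
        (SUP Q\<in>QQ. ereal (probQ Q (length xs) (prefix_upto (ord Q) (emp_dist xs)))) \<ge> ereal eps)"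

definition contaminated :: "('a \<Rightarrow> real) set \<Rightarrow> real \<Rightarrow> 'a list \<Rightarrow> bool" where
  "contaminated QQ eps xs \<longleftrightarrow> \<not> typical QQ eps xs"

end

theory Submission
  imports Defs
begin

text \<open>Method of types. All sequences with the same empirical distribution P (the type class
  of P) have the same Q-probability, exp(-p (H(P) + D(P||Q))); comparing with Q = P shows
  that the type class has Q-probability at most exp(-p D(P||Q)). In an admissible ordering
  every P^j preceding P is at most as likely as P, and there are at most (p+1)^n empirical
  distributions, so the prefix ending at P has Q-probability at most
  (p+1)^n exp(-p D(P||Q)) \<le> eps/(p+1)^n < eps, uniformly in Q.\<close>

definition emp_dist_class :: "'a list \<Rightarrow> 'a list set" where
  "emp_dist_class xs = {ys. length ys = length xs \<and> emp_dist ys = emp_dist xs}"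

lemma prod_list_map_eq_prod_count_list:
  fixes Q :: "'a::finite \<Rightarrow> 'b::comm_monoid_mult"
  shows "prod_list (map Q ys) = (\<Prod>x\<in>UNIV. Q x ^ count_list ys x)"
proof (induction ys)
  case (Cons a ys)
  have "(\<Prod>x\<in>UNIV. Q x ^ count_list (a # ys) x)
      = (\<Prod>x\<in>UNIV. (if x = a then Q x else 1) * Q x ^ count_list ys x)"
    by (rule prod.cong) auto
  also have "\<dots> = Q a * (\<Prod>x\<in>UNIV. Q x ^ count_list ys x)"
    by (simp add: prod.distrib)
  finally show ?case using Cons by simp
qed simp

lemma finite_lists_length_eq_UNIV: "finite {xs :: 'a::finite list. length xs = n}"
  using finite_lists_length_eq[of "UNIV :: 'a set" n] by simp

lemma sum_prod_list_lists_length: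
  fixes f :: "'a::finite \<Rightarrow> 'b::comm_semiring_1"
  shows "(\<Sum>ys\<in>{ys. length ys = m}. prod_list (map f ys)) = sum f UNIV ^ m"
proof (induction m)
  case (Suc m)
  have lists_Suc: "{ys :: 'a list. length ys = Suc m} = (\<lambda>(a, ys). a # ys) ` (UNIV \<times> {ys. length ys = m})"
    by (auto simp: length_Suc_conv)
  have "inj_on (\<lambda>(a, ys). a # ys) (UNIV \<times> {ys :: 'a list. length ys = m})"
    by (auto simp: inj_on_def)
  then have "(\<Sum>ys\<in>{ys. length ys = Suc m}. prod_list (map f ys))
      = (\<Sum>(a, ys)\<in>UNIV \<times> {ys. length ys = m}. f a * prod_list (map f ys))"
    unfolding lists_Suc by (subst sum.reindex) (simp_all add: case_prod_beta)
  also have "\<dots> = (\<Sum>a\<in>UNIV. f a) * (\<Sum>ys\<in>{ys. length ys = m}. prod_list (map f ys))"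
    by (simp add: sum.cartesian_product[symmetric] sum_product)
  finally show ?case using Suc by simp
qed simp

lemma probQ_nonneg:
  assumes "\<And>x. 0 \<le> Q x"
  shows "0 \<le> probQ (Q :: 'a::finite \<Rightarrow> real) p S"
  unfolding probQ_def
  by (intro sum_nonneg) (auto simp: prod_list_map_eq_prod_count_list assms intro!: prod_nonneg)

lemma probQ_le_1:
  assumes "is_distribution Q"
  shows "probQ Q p S \<le> 1"
proof -
  have "probQ Q p S \<le> (\<Sum>ys\<in>{ys. length ys = p}. prod_list (map Q ys))"
    unfolding probQ_def using assms
    by (intro sum_mono2 finite_lists_length_eq_UNIV)
      (auto simp: prod_list_map_eq_prod_count_list is_distribution_def intro!: prod_nonneg)
  also have "\<dots> = 1"
    using assms by (simp add: sum_prod_list_lists_length is_distribution_def)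
  finally show ?thesis .
qed

lemma probQ_eq_sum_singletons:
  fixes Q :: "'a::finite \<Rightarrow> real"
  assumes "finite S"
  shows "probQ Q p S = (\<Sum>P\<in>S. probQ Q p {P})"
proof -
  define Ys where "Ys = {xs. length xs = p \<and> emp_dist xs \<in> S}"
  have "finite Ys"
    unfolding Ys_def by (rule finite_subset[OF _ finite_lists_length_eq_UNIV[of p]]) auto
  then have "probQ Q p S = (\<Sum>P\<in>S. \<Sum>ys\<in>{ys\<in>Ys. emp_dist ys = P}. prod_list (map Q ys))"
    unfolding probQ_def Ys_def[symmetric]
    by (rule sum.group[symmetric, OF _ assms]) (auto simp: Ys_def)
  also have "\<dots> = (\<Sum>P\<in>S. probQ Q p {P})"
    by (intro sum.cong) (auto simp: probQ_def Ys_def intro!: sum.cong)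
  finally show ?thesis .
qed

lemma finite_emp_dists: "finite (emp_dists p :: ('a::finite \<Rightarrow> real) set)"
proof -
  have "emp_dists p = emp_dist ` {xs :: 'a list. length xs = p}"
    by (auto simp: emp_dists_def)
  then show ?thesis by (simp add: finite_lists_length_eq_UNIV)
qed

lemma card_emp_dists_le: "card (emp_dists p :: ('a::finite \<Rightarrow> real) set) \<le> (p + 1) ^ CARD('a)"
proof -
  let ?counts = "Pi\<^sub>E (UNIV :: 'a set) (\<lambda>_. {0..p})"
  let ?normalise = "\<lambda>c :: 'a \<Rightarrow> nat. \<lambda>x. real (c x) / real p"
  have "emp_dists p \<subseteq> ?normalise ` ?counts"
  proof
    fix P :: "'a \<Rightarrow> real"
    assume "P \<in> emp_dists p"
    then obtain xs where xs: "length xs = p" "P = emp_dist xs"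
      by (auto simp: emp_dists_def)
    then have "count_list xs \<in> ?counts"
      using count_le_length[of xs] by (auto simp: PiE_UNIV_domain)
    then show "P \<in> ?normalise ` ?counts"
      using xs by (auto simp: emp_dist_def)
  qed
  then have "card (emp_dists p :: ('a \<Rightarrow> real) set) \<le> card (?normalise ` ?counts)"
    by (intro card_mono finite_imageI finite_PiE) auto
  also have "\<dots> \<le> card ?counts"
    by (rule card_image_le) (auto intro: finite_PiE)
  also have "\<dots> = (p + 1) ^ CARD('a)"
    by (simp add: card_PiE)
  finally show ?thesis .
qed

lemma valid_ordering_exists: "\<exists>L. valid_ordering Q p (L :: ('a::finite \<Rightarrow> real) list)"
proof -
  obtain L where L: "distinct L" "set L = (emp_dists p :: ('a \<Rightarrow> real) set)"
    using finite_distinct_list[OF finite_emp_dists] by blast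
  have "valid_ordering Q p (sort_key (\<lambda>P. probQ Q p {P}) L)"
    using L sorted_sort_key[of "\<lambda>P. probQ Q p {P}"]
    by (simp add: valid_ordering_def sorted_wrt_map)
  then show ?thesis ..
qed

lemma is_distribution_emp_dist:
  assumes "xs \<noteq> []"
  shows "is_distribution (emp_dist (xs :: 'a::finite list))"
proof -
  have "(\<Sum>x\<in>UNIV. real (count_list xs x)) = real (length xs)"
    using sum_count_set[of xs UNIV] by (simp flip: of_nat_sum)
  then show ?thesis
    using assms by (simp add: is_distribution_def emp_dist_def flip: sum_divide_distrib)
qed

lemma count_list_eq_if_emp_dist_eq:
  assumes "length ys = length xs" and "emp_dist ys = emp_dist xs"
  shows "count_list ys = count_list xs"
proof (cases "xs = []")
  case False
  then show ?thesis
    using assms by (auto simp: emp_dist_def fun_eq_iff)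
qed (use assms in simp)

lemma probQ_emp_dist_singleton:
  fixes Q :: "'a::finite \<Rightarrow> real"
  shows "probQ Q (length xs) {emp_dist xs}
     = real (card (emp_dist_class xs)) * (\<Prod>x\<in>UNIV. Q x ^ count_list xs x)"
proof -
  have "prod_list (map Q ys) = (\<Prod>x\<in>UNIV. Q x ^ count_list xs x)" if "ys \<in> emp_dist_class xs" for ys
  proof -
    have "count_list ys = count_list xs"
      using that unfolding emp_dist_class_def by (blast intro: count_list_eq_if_emp_dist_eq)
    then show ?thesis
      by (simp only: prod_list_map_eq_prod_count_list)
  qed
  then have "probQ Q (length xs) {emp_dist xs} = (\<Sum>ys\<in>emp_dist_class xs. \<Prod>x\<in>UNIV. Q x ^ count_list xs x)"
    unfolding probQ_def by (intro sum.cong) (auto simp: emp_dist_class_def)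
  then show ?thesis by simp
qed

lemma card_emp_dist_class_mult_prod_le_1:
  fixes xs :: "'a::finite list"
  assumes "xs \<noteq> []"
  shows "real (card (emp_dist_class xs)) * (\<Prod>x\<in>UNIV. emp_dist xs x ^ count_list xs x) \<le> 1"
  using probQ_le_1[OF is_distribution_emp_dist[OF assms], of "length xs" "{emp_dist xs}"]
  by (simp add: probQ_emp_dist_singleton)

lemma prod_count_list_eq_exp_KL:
  fixes Q :: "'a::finite \<Rightarrow> real" and xs :: "'a list"
  defines "P \<equiv> emp_dist xs"
  assumes "xs \<noteq> []" and Q_pos: "\<And>x. P x > 0 \<Longrightarrow> Q x > 0"
  shows "(\<Prod>x\<in>UNIV. Q x ^ count_list xs x)
     = (\<Prod>x\<in>UNIV. P x ^ count_list xs x)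
       * exp (- real (length xs) * (\<Sum>x\<in>{x. P x > 0}. P x * ln (P x / Q x)))"
proof -
  define S where "S = {x. P x > 0}"
  have count_eq: "real (count_list xs x) = real (length xs) * P x" for x
    using assms(2) by (simp add: P_def emp_dist_def)
  have S_iff: "x \<in> S \<longleftrightarrow> count_list xs x > 0" for x
    using assms(2) by (simp add: S_def P_def emp_dist_def zero_less_divide_iff)
  have restrict: "(\<Prod>x\<in>UNIV. R x ^ count_list xs x) = (\<Prod>x\<in>S. R x ^ count_list xs x)"
    for R :: "'a \<Rightarrow> real"
    by (rule prod.mono_neutral_right) (auto simp: S_iff)
  have factor: "Q x ^ count_list xs x
      = P x ^ count_list xs x * exp (- real (count_list xs x) * ln (P x / Q x))" if "x \<in> S" for x
  proof -
    have "P x > 0" "Q x > 0" using that Q_pos by (auto simp: S_def)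
    then have "Q x = P x * exp (- ln (P x / Q x))"
      by (simp add: exp_minus)
    then have "Q x ^ count_list xs x = P x ^ count_list xs x * exp (- ln (P x / Q x)) ^ count_list xs x"
      by (metis power_mult_distrib)
    then show ?thesis
      by (simp flip: exp_of_nat_mult)
  qed
  have "(\<Prod>x\<in>S. Q x ^ count_list xs x)
      = (\<Prod>x\<in>S. P x ^ count_list xs x) * exp (\<Sum>x\<in>S. - real (count_list xs x) * ln (P x / Q x))"
    by (simp add: factor prod.distrib exp_sum)
  moreover have "(\<Sum>x\<in>S. - real (count_list xs x) * ln (P x / Q x))
      = - real (length xs) * (\<Sum>x\<in>S. P x * ln (P x / Q x))"
    by (simp add: count_eq sum_distrib_left mult.assoc flip: sum_negf)
  ultimately show ?thesis
    by (simp add: restrict S_def)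
qed

lemma probQ_emp_dist_le_exp_KL:
  assumes Q: "is_distribution Q" and "xs \<noteq> []" and KL_ge: "KL (emp_dist xs) Q \<ge> ereal B"
  shows "probQ Q (length xs) {emp_dist xs} \<le> exp (- real (length xs) * B)"
proof (cases "\<exists>x. emp_dist xs x > 0 \<and> Q x = 0")
  case True
  then obtain x where "count_list xs x > 0" "Q x = 0"
    by (auto simp: emp_dist_def zero_less_divide_iff)
  then have prod_zero: "(\<Prod>x\<in>UNIV. Q x ^ count_list xs x) = 0"
    by (intro prod_zero) auto
  show ?thesis
    unfolding probQ_emp_dist_singleton prod_zero by simp
next
  case False
  define D where "D = (\<Sum>x\<in>{x. emp_dist xs x > 0}. emp_dist xs x * ln (emp_dist xs x / Q x))"
  have "D \<ge> B"
    using KL_ge False by (simp add: KL_def D_def)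
  have Q_pos: "Q x > 0" if "emp_dist xs x > 0" for x
  proof -
    have "Q x \<noteq> 0" using False that by blast
    moreover have "Q x \<ge> 0" using Q by (simp add: is_distribution_def)
    ultimately show ?thesis by simp
  qed
  have "probQ Q (length xs) {emp_dist xs}
      = real (card (emp_dist_class xs)) * (\<Prod>x\<in>UNIV. Q x ^ count_list xs x)"
    by (rule probQ_emp_dist_singleton)
  also have "\<dots> = real (card (emp_dist_class xs)) * (\<Prod>x\<in>UNIV. emp_dist xs x ^ count_list xs x)
      * exp (- real (length xs) * D)"
    using prod_count_list_eq_exp_KL[OF \<open>xs \<noteq> []\<close> Q_pos] by (simp add: D_def)
  also have "\<dots> \<le> exp (- real (length xs) * D)"
    using card_emp_dist_class_mult_prod_le_1[OF \<open>xs \<noteq> []\<close>]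
    by (intro mult_left_le_one_le mult_nonneg_nonneg prod_nonneg) (simp_all add: emp_dist_def)
  also have "\<dots> \<le> exp (- real (length xs) * B)"
    using \<open>D \<ge> B\<close> by (simp add: mult_left_mono)
  finally show ?thesis .
qed

lemma probQ_prefix_upto_le:
  fixes Q :: "'a::finite \<Rightarrow> real"
  assumes Q_nonneg: "\<And>x. 0 \<le> Q x" and L: "valid_ordering Q p L" and P: "P \<in> emp_dists p"
  shows "probQ Q p (prefix_upto L P) \<le> real (card (emp_dists p :: ('a \<Rightarrow> real) set)) * probQ Q p {P}"
proof -
  define S where "S = prefix_upto L P"
  have set_L: "set L = emp_dists p"
    and sorted: "sorted_wrt (\<lambda>P P'. probQ Q p {P} \<le> probQ Q p {P'}) L"
    using L by (auto simp: valid_ordering_def)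
  have S_sub: "S \<subseteq> emp_dists p"
    using P set_L by (auto simp: S_def prefix_upto_def dest: set_takeWhileD)
  have earlier_le: "probQ Q p {P'} \<le> probQ Q p {P}" if "P' \<in> S" for P'
  proof (cases "P' = P")
    case False
    let ?before = "takeWhile (\<lambda>P'. P' \<noteq> P) L" and ?after = "dropWhile (\<lambda>P'. P' \<noteq> P) L"
    have "P' \<in> set ?before"
      using that False by (auto simp: S_def prefix_upto_def)
    moreover have "P \<in> set ?after"
    proof -
      have "P \<in> set L" using P set_L by simp
      then show ?thesis by (induction L) auto
    qed
    moreover have "sorted_wrt (\<lambda>P P'. probQ Q p {P} \<le> probQ Q p {P'}) (?before @ ?after)"
      using sorted by (simp only: takeWhile_dropWhile_id)
    ultimately show ?thesis
      unfolding sorted_wrt_append by blast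
  qed simp
  have "probQ Q p S = (\<Sum>P'\<in>S. probQ Q p {P'})"
    using S_sub finite_emp_dists by (intro probQ_eq_sum_singletons) (rule finite_subset)
  also have "\<dots> \<le> real (card S) * probQ Q p {P}"
    using sum_mono[of S _ "\<lambda>_. probQ Q p {P}", OF earlier_le] by simp
  also have "\<dots> \<le> real (card (emp_dists p :: ('a \<Rightarrow> real) set)) * probQ Q p {P}"
    using card_mono[OF finite_emp_dists S_sub] probQ_nonneg[OF Q_nonneg]
    by (intro mult_right_mono) auto
  finally show ?thesis by (simp add: S_def)
qed

lemma power_mult_exp_threshold:
  fixes p eps :: real
  assumes "p > 0" and "eps > 0"
  shows "(p + 1) ^ n * exp (- p * (ln (1 / eps) / p + 2 * real n / p * ln (p + 1))) = eps / (p + 1) ^ n"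
proof -
  have "- p * (ln (1 / eps) / p + 2 * real n / p * ln (p + 1)) = ln eps - real (2 * n) * ln (p + 1)"
    using assms by (simp add: ln_div right_diff_distrib)
  moreover have "exp (real (2 * n) * ln (p + 1)) = (p + 1) ^ n * (p + 1) ^ n"
    using assms by (simp only: exp_of_nat_mult mult_2 power_add) simp
  ultimately have "(p + 1) ^ n * exp (- p * (ln (1 / eps) / p + 2 * real n / p * ln (p + 1)))
      = (p + 1) ^ n * (eps / ((p + 1) ^ n * (p + 1) ^ n))"
    using assms by (simp add: exp_diff)
  also have "\<dots> = eps / (p + 1) ^ n"
    using assms by simp
  finally show ?thesis .
qed

lemma probQ_prefix_upto_le_exp_KL:
  fixes Q :: "'a::finite \<Rightarrow> real"
  assumes Q: "is_distribution Q" and L: "valid_ordering Q (length xs) L"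
    and "xs \<noteq> []" and KL_ge: "KL (emp_dist xs) Q \<ge> ereal B"
  shows "probQ Q (length xs) (prefix_upto L (emp_dist xs))
     \<le> (real (length xs) + 1) ^ CARD('a) * exp (- real (length xs) * B)"
proof -
  have Q_nonneg: "\<And>x. 0 \<le> Q x"
    using Q by (simp add: is_distribution_def)
  have "real (card (emp_dists (length xs) :: ('a \<Rightarrow> real) set)) \<le> real ((length xs + 1) ^ CARD('a))"
    by (simp only: of_nat_le_iff card_emp_dists_le)
  then have card_le: "real (card (emp_dists (length xs) :: ('a \<Rightarrow> real) set)) \<le> (real (length xs) + 1) ^ CARD('a)"
    by (simp add: add.commute)
  have "emp_dist xs \<in> emp_dists (length xs)"
    unfolding emp_dists_def by blast
  then have "probQ Q (length xs) (prefix_upto L (emp_dist xs))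
      \<le> real (card (emp_dists (length xs) :: ('a \<Rightarrow> real) set)) * probQ Q (length xs) {emp_dist xs}"
    by (rule probQ_prefix_upto_le[OF Q_nonneg L])
  also have "\<dots> \<le> (real (length xs) + 1) ^ CARD('a) * exp (- real (length xs) * B)"
    using card_le probQ_emp_dist_le_exp_KL[OF Q \<open>xs \<noteq> []\<close> KL_ge] probQ_nonneg[OF Q_nonneg]
    by (intro mult_mono) auto
  finally show ?thesis .
qed

lemma not_typical_if_SUP_less:
  assumes "\<forall>Q\<in>QQ. valid_ordering Q (length xs) (ord Q)"
    and "(SUP Q\<in>QQ. ereal (probQ Q (length xs) (prefix_upto (ord Q) (emp_dist xs)))) < ereal eps"
  shows "\<not> typical QQ eps xs"
proof
  assume "typical QQ eps xs"
  then have "(SUP Q\<in>QQ. ereal (probQ Q (length xs) (prefix_upto (ord Q) (emp_dist xs)))) \<ge> ereal eps"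
    using assms(1) unfolding typical_def by blast
  with assms(2) show False by simp
qed

theorem theorem1:
  fixes QQ :: "('a::finite \<Rightarrow> real) set" and eps :: real and xs :: "'a list"
  assumes "\<forall>Q\<in>QQ. is_distribution Q"
    and "0 < eps" and "eps < 1"
    and "length xs \<ge> 1"
    and "(INF Q\<in>QQ. KL (emp_dist xs) Q) \<ge>
           ereal (ln (1 / eps) / real (length xs)
                  + 2 * real CARD('a) / real (length xs) * ln (real (length xs) + 1))"
  shows "contaminated QQ eps xs \<and> \<not> typical QQ eps xs"
proof -
  define ord where "ord Q = (SOME L. valid_ordering Q (length xs) L)" for Q :: "'a \<Rightarrow> real"
  have ord: "valid_ordering Q (length xs) (ord Q)" for Q
    unfolding ord_def by (rule someI_ex[OF valid_ordering_exists])
  have "xs \<noteq> []" "real (length xs) > 0"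
    using assms(4) by auto
  have "probQ Q (length xs) (prefix_upto (ord Q) (emp_dist xs)) \<le> eps / (real (length xs) + 1) ^ CARD('a)"
    if "Q \<in> QQ" for Q
    using probQ_prefix_upto_le_exp_KL[OF _ ord \<open>xs \<noteq> []\<close> order_trans[OF assms(5) INF_lower[OF that]]]
      assms(1) that power_mult_exp_threshold[OF \<open>real (length xs) > 0\<close> assms(2)]
    by simp
  then have "(SUP Q\<in>QQ. ereal (probQ Q (length xs) (prefix_upto (ord Q) (emp_dist xs))))
      \<le> ereal (eps / (real (length xs) + 1) ^ CARD('a))"
    by (intro SUP_least) simp
  also have "\<dots> < ereal eps"
    using assms(2) \<open>real (length xs) > 0\<close> by (simp add: one_less_power divide_less_eq)
  finally have "\<not> typical QQ eps xs"
    using ord by (intro not_typical_if_SUP_less) auto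
  then show ?thesis
    by (simp add: contaminated_def)
qed

end
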